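(* Let $\mathcal{X}$ be a separable infinite-dimensional complex Banach space, $T\in\mathcal{B}(\mathcal{X})$, and $\mathcal{M}$ a nontrivial closed subspace of $\mathcal{X}$. Suppose there are an increasing sequence $(n_k)_{k\in\mathbb{N}}$ of positive integers and two subsets $D_1,D_2\subseteq\mathcal{M}$, each dense in $\mathcal{M}$, such that: (a) for every $y\in D_2$ there is a sequence $(x_k)_{k}$ in $\mathcal{M}$ with $\|x_k\|\to0$ and $T^{n_k}x_k\to y$ as $k\to\infty$; (b) for every $x\in D_1$ (and every $y\in D_2$ with the sequence $(x_k)$ from (a)), $\|T^{n_k}x\|\,\|x_k\|\to0$ as $k\to\infty$; (c) $T^{n_k}\mathcal{M}\subseteq\mathcal{M}$ for all $k$. Then $T$ is $\mathcal{M}$-diskcyclic.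
   Context: $\mathbb{D}=\{\alpha\in\mathbb{C}:|\alpha|\le1\}$. $T$ is $\mathcal{M}$-diskcyclic if there is $x\in\mathcal{X}$ such that $\{\alpha T^nx:\alpha\in\mathbb{D},\ n=0,1,2,\dots\}\cap\mathcal{M}$ is dense in $\mathcal{M}$. *)

theory Defs
  imports "HOL-Analysis.Analysis"
begin

class complex_vector_sc = real_vector +
  fixes scaleC :: "complex \<Rightarrow> 'a \<Rightarrow> 'a" (infixr "*\<^sub>C" 75)
  assumes scaleC_add_right: "a *\<^sub>C (x + y) = a *\<^sub>C x + a *\<^sub>C y"
    and scaleC_add_left: "(a + b) *\<^sub>C x = a *\<^sub>C x + b *\<^sub>C x"
    and scaleC_scaleC: "a *\<^sub>C (b *\<^sub>C x) = (a * b) *\<^sub>C x"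
    and scaleC_one: "1 *\<^sub>C x = x"
    and scaleR_scaleC: "scaleR r x = complex_of_real r *\<^sub>C x"

class complex_normed_sc = complex_vector_sc + real_normed_vector +
  assumes norm_scaleC: "norm (a *\<^sub>C x) = cmod a * norm x"

text \<open>Infinite-dimensional (real and complex dimension are simultaneously finite or infinite).\<close>
definition infinite_dimensional :: "'a::real_vector itself \<Rightarrow> bool" where
  "infinite_dimensional _ \<longleftrightarrow> (\<forall>B::'a set. finite B \<longrightarrow> span B \<noteq> UNIV)"

definition bounded_clinear :: "('a::complex_normed_sc \<Rightarrow> 'b::complex_normed_sc) \<Rightarrow> bool" where
  "bounded_clinear T \<longleftrightarrow> bounded_linear T \<and> (\<forall>c x. T (c *\<^sub>C x) = c *\<^sub>C T x)"

definition closed_csubspace :: "'a::complex_normed_sc set \<Rightarrow> bool" where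
  "closed_csubspace M \<longleftrightarrow> closed M \<and> 0 \<in> M \<and> (\<forall>x\<in>M. \<forall>y\<in>M. x + y \<in> M)
     \<and> (\<forall>c. \<forall>x\<in>M. c *\<^sub>C x \<in> M)"

definition unit_disk :: "complex set" where
  "unit_disk = {\<alpha>. cmod \<alpha> \<le> 1}"

definition M_diskcyclic :: "'a::complex_normed_sc set \<Rightarrow> ('a \<Rightarrow> 'a) \<Rightarrow> bool" where
  "M_diskcyclic M T \<longleftrightarrow>
     (\<exists>x. M \<subseteq> closure ({\<alpha> *\<^sub>C (T ^^ n) x | \<alpha> n. \<alpha> \<in> unit_disk} \<inter> M))"

end

theory Submission
  imports Defs
begin

text \<open>
  Given open sets U, V meeting M, pick x in U and D1, y in V and D2, and the sequence x_k
  of (a). For large k the point u = x + c x_k with c = max 1 (2 |T^(n_k) x| / delta) is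
  still close to x, because c |x_k| is small by (b); and the scalar 1/c of the unit disk
  gives (1/c) T^(n_k) u = (1/c) T^(n_k) x + T^(n_k) x_k, which is close to y. So the disk
  orbits along (n_k) are topologically transitive on M, and Birkhoff's Baire-category
  argument in the complete separable space M yields a point whose disk orbit is dense in M;
  by (c) this orbit stays inside M.
\<close>

lemma bounded_linear_scaleC: "bounded_linear (\<lambda>x::'a::complex_normed_sc. a *\<^sub>C x)"
proof (rule bounded_linear_intro[where K = "cmod a"])
  fix x y :: 'a
  show "a *\<^sub>C (x + y) = a *\<^sub>C x + a *\<^sub>C y" by (rule scaleC_add_right)
next
  fix r :: real and x :: 'a
  show "a *\<^sub>C (r *\<^sub>R x) = r *\<^sub>R (a *\<^sub>C x)"
    by (simp add: scaleR_scaleC scaleC_scaleC mult.commute)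
next
  fix x :: 'a
  show "norm (a *\<^sub>C x) \<le> norm x * cmod a" by (simp add: norm_scaleC)
qed

lemma bounded_clinear_funpow:
  fixes T :: "'a::complex_normed_sc \<Rightarrow> 'a"
  assumes "bounded_clinear T"
  shows "bounded_clinear (T ^^ m)"
proof (induction m)
  case 0
  show ?case by (simp add: bounded_clinear_def id_def)
next
  case (Suc m)
  with assms show ?case
    by (auto simp: bounded_clinear_def intro: bounded_linear_compose)
qed

lemma exists_scaling_small_and_damped:
  fixes a w y z :: "'a::complex_normed_sc"
  assumes "0 < d" "norm w < e" "norm a * norm w < e * d / 2" "dist z y < d / 2"
  shows "\<exists>c \<ge> 1. norm (complex_of_real c *\<^sub>C w) < e
           \<and> dist (inverse (complex_of_real c) *\<^sub>C a + z) y < d"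
proof -
  define c where "c = max 1 (2 * norm a / d)"
  have "c \<ge> 1" by (simp add: c_def)
  have "c * norm w < e"
  proof (cases "2 * norm a / d \<le> 1")
    case True
    then show ?thesis using assms(2) by (simp add: c_def)
  next
    case False
    then have "c * norm w = 2 * (norm a * norm w) / d" by (simp add: c_def)
    also have "\<dots> < e" using assms(1,3) by (simp add: field_simps)
    finally show ?thesis .
  qed
  then have "norm (complex_of_real c *\<^sub>C w) < e"
    using \<open>c \<ge> 1\<close> by (simp add: norm_scaleC)
  have "2 * norm a / d \<le> c" by (simp add: c_def)
  then have "norm a / c \<le> d / 2"
    using \<open>c \<ge> 1\<close> assms(1) by (simp add: field_simps)
  moreover have "norm (inverse (complex_of_real c) *\<^sub>C a) = norm a / c"
    using \<open>c \<ge> 1\<close> by (simp add: norm_scaleC norm_inverse divide_inverse_commute)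
  moreover have "dist (inverse (complex_of_real c) *\<^sub>C a + z) y
      \<le> norm (inverse (complex_of_real c) *\<^sub>C a) + dist z y"
    using norm_triangle_ineq[of "inverse (complex_of_real c) *\<^sub>C a" "z - y"]
    by (simp add: dist_norm add_diff_eq)
  ultimately have "dist (inverse (complex_of_real c) *\<^sub>C a + z) y < d"
    using assms(4) by linarith
  with \<open>c \<ge> 1\<close> \<open>norm (complex_of_real c *\<^sub>C w) < e\<close> show ?thesis by blast
qed

lemma dense_orbit_of_transitive_family:
  fixes f :: "'i \<Rightarrow> 'a::{complete_space, second_countable_topology} \<Rightarrow> 'a"
  assumes "closed M" "M \<noteq> {}"
    and cont: "\<And>i. i \<in> I \<Longrightarrow> continuous_on M (f i)"
    and trans: "\<And>U V. open U \<Longrightarrow> open V \<Longrightarrow> U \<inter> M \<noteq> {} \<Longrightarrow> V \<inter> M \<noteq> {} \<Longrightarrow>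
                  \<exists>u \<in> U \<inter> M. \<exists>i \<in> I. f i u \<in> V"
  shows "\<exists>u \<in> M. M \<subseteq> closure ((\<lambda>i. f i u) ` I)"
proof -
  obtain \<B> :: "'a set set" where "countable \<B>" and open_\<B>: "\<And>V. V \<in> \<B> \<Longrightarrow> open V"
    and \<B>_basis: "\<And>S. open S \<Longrightarrow> \<exists>\<U> \<subseteq> \<B>. S = \<Union>\<U>"
    using univ_second_countable by blast
  define hits where "hits V = (\<Union>i\<in>I. M \<inter> f i -` V)" for V
  have hits_open: "openin (top_of_set M) (hits V)" if "open V" for V
    unfolding hits_def using cont that by (intro openin_Union) (auto intro: continuous_openin_preimage_gen)
  have hits_dense: "(top_of_set M) closure_of (hits V) = topspace (top_of_set M)"
    if "open V" "V \<inter> M \<noteq> {}" for V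
    unfolding dense_intersects_open
  proof (intro allI impI)
    fix W assume "openin (top_of_set M) W \<and> W \<noteq> {}"
    then obtain U where "open U" "W = U \<inter> M" "U \<inter> M \<noteq> {}"
      by (auto simp: openin_open)
    with trans[of U V] that show "hits V \<inter> W \<noteq> {}"
      unfolding hits_def by blast
  qed
  have "(top_of_set M) closure_of \<Inter>(hits ` {V \<in> \<B>. V \<inter> M \<noteq> {}}) = topspace (top_of_set M)"
  proof (rule Baire_category)
    show "completely_metrizable_space (top_of_set M) \<or>
        locally_compact_space (top_of_set M) \<and> regular_space (top_of_set M)"
      using \<open>closed M\<close> closed_closedin completely_metrizable_space_closedin
        completely_metrizable_space_euclidean by blast
  qed (use \<open>countable \<B>\<close> open_\<B> hits_open hits_dense in auto)
  then have "\<Inter>(hits ` {V \<in> \<B>. V \<inter> M \<noteq> {}}) \<inter> M \<noteq> {}"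
    unfolding dense_intersects_open using \<open>M \<noteq> {}\<close> openin_subtopology_refl[of euclidean M]
    by simp
  then obtain u where "u \<in> M" and u_hits: "\<And>V. V \<in> \<B> \<Longrightarrow> V \<inter> M \<noteq> {} \<Longrightarrow> u \<in> hits V"
    by blast
  have "M \<subseteq> closure ((\<lambda>i. f i u) ` I)"
  proof
    fix m assume "m \<in> M"
    show "m \<in> closure ((\<lambda>i. f i u) ` I)"
      unfolding closure_iff_nhds_not_empty
    proof (intro allI impI)
      fix A S assume "S \<subseteq> A" "open S" "m \<in> S"
      moreover obtain \<U> where "\<U> \<subseteq> \<B>" "S = \<Union>\<U>"
        using \<B>_basis \<open>open S\<close> by blast
      ultimately obtain V where "V \<in> \<B>" "m \<in> V" "V \<subseteq> A"
        by blast
      then have "u \<in> hits V" using u_hits \<open>m \<in> M\<close> by blast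
      then show "(\<lambda>i. f i u) ` I \<inter> A \<noteq> {}"
        using \<open>V \<subseteq> A\<close> unfolding hits_def by blast
    qed
  qed
  then show ?thesis using \<open>u \<in> M\<close> by blast
qed

lemma disk_transitive_on_subspace:
  fixes T :: "'a::complex_normed_sc \<Rightarrow> 'a" and n :: "nat \<Rightarrow> nat"
  assumes "bounded_clinear T" and "closed_csubspace M"
    and "D1 \<subseteq> M" "M \<subseteq> closure D1" "M \<subseteq> closure D2"
    and criterion: "\<forall>y\<in>D2. \<exists>xs :: nat \<Rightarrow> 'a. (\<forall>k. xs k \<in> M)
            \<and> (\<lambda>k. norm (xs k)) \<longlonglongrightarrow> 0
            \<and> (\<lambda>k. (T ^^ n k) (xs k)) \<longlonglongrightarrow> y
            \<and> (\<forall>x\<in>D1. (\<lambda>k. norm ((T ^^ n k) x) * norm (xs k)) \<longlonglongrightarrow> 0)"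
    and "open U" "U \<inter> M \<noteq> {}" "open V" "V \<inter> M \<noteq> {}"
  shows "\<exists>u \<in> U \<inter> M. \<exists>\<alpha> \<in> unit_disk. \<exists>k. \<alpha> *\<^sub>C (T ^^ n k) u \<in> V"
proof -
  obtain x where "x \<in> U" "x \<in> D1"
    using assms(4,7,8) open_Int_closure_eq_empty[of U D1] by blast
  obtain y where "y \<in> V" "y \<in> D2"
    using assms(5,9,10) open_Int_closure_eq_empty[of V D2] by blast
  obtain e where "e > 0" "ball x e \<subseteq> U"
    using \<open>open U\<close> \<open>x \<in> U\<close> open_contains_ball by blast
  obtain d where "d > 0" "ball y d \<subseteq> V"
    using \<open>open V\<close> \<open>y \<in> V\<close> open_contains_ball by blast
  obtain xs where "\<forall>k. xs k \<in> M" and "(\<lambda>k. norm (xs k)) \<longlonglongrightarrow> 0"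
    and "(\<lambda>k. (T ^^ n k) (xs k)) \<longlonglongrightarrow> y"
    and "(\<lambda>k. norm ((T ^^ n k) x) * norm (xs k)) \<longlonglongrightarrow> 0"
    using criterion \<open>y \<in> D2\<close> \<open>x \<in> D1\<close> by blast
  then have "\<forall>\<^sub>F k in sequentially. norm (xs k) < e
      \<and> norm ((T ^^ n k) x) * norm (xs k) < e * d / 2
      \<and> dist ((T ^^ n k) (xs k)) y < d / 2"
    using \<open>e > 0\<close> \<open>d > 0\<close>
    by (intro eventually_conj order_tendstoD(2) tendstoD) auto
  then obtain k where "norm (xs k) < e" "norm ((T ^^ n k) x) * norm (xs k) < e * d / 2"
    "dist ((T ^^ n k) (xs k)) y < d / 2"
    using eventually_happens'[OF sequentially_bot] by blast
  then obtain c :: real where "c \<ge> 1" and small: "norm (complex_of_real c *\<^sub>C xs k) < e"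
    and close: "dist (inverse (complex_of_real c) *\<^sub>C (T ^^ n k) x + (T ^^ n k) (xs k)) y < d"
    using exists_scaling_small_and_damped[OF \<open>d > 0\<close>] by blast
  define u where "u = x + complex_of_real c *\<^sub>C xs k"
  define \<alpha> where "\<alpha> = inverse (complex_of_real c)"
  have "u \<in> M"
    using assms(2) \<open>x \<in> D1\<close> \<open>D1 \<subseteq> M\<close> \<open>\<forall>k. xs k \<in> M\<close>
    unfolding u_def closed_csubspace_def by blast
  moreover have "u \<in> U"
    using small \<open>ball x e \<subseteq> U\<close> by (auto simp: u_def dist_norm)
  moreover have "\<alpha> \<in> unit_disk"
    using \<open>c \<ge> 1\<close> by (simp add: \<alpha>_def unit_disk_def norm_inverse inverse_le_1_iff)
  moreover have "\<alpha> *\<^sub>C (T ^^ n k) u = \<alpha> *\<^sub>C (T ^^ n k) x + (T ^^ n k) (xs k)"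
  proof -
    have "bounded_clinear (T ^^ n k)"
      using bounded_clinear_funpow[OF assms(1)] .
    then have "(T ^^ n k) u = (T ^^ n k) x + complex_of_real c *\<^sub>C (T ^^ n k) (xs k)"
      by (simp add: u_def bounded_clinear_def linear_add bounded_linear.linear)
    then show ?thesis
      using \<open>c \<ge> 1\<close> by (simp add: \<alpha>_def scaleC_add_right scaleC_scaleC scaleC_one)
  qed
  then have "\<alpha> *\<^sub>C (T ^^ n k) u \<in> V"
    using close \<open>ball y d \<subseteq> V\<close> by (auto simp: \<alpha>_def dist_commute)
  ultimately show ?thesis by blast
qed

theorem mainTheorem6:
  fixes T :: "'a::{complex_normed_sc, banach, second_countable_topology} \<Rightarrow> 'a"
    and M D1 D2 :: "'a set"
    and n :: "nat \<Rightarrow> nat"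
  assumes "infinite_dimensional TYPE('a)"
    and "bounded_clinear T"
    and "closed_csubspace M" and "M \<noteq> {0}" and "M \<noteq> UNIV"
    and "strict_mono n" and "\<forall>k. n k > 0"
    and "D1 \<subseteq> M" and "M \<subseteq> closure D1"
    and "D2 \<subseteq> M" and "M \<subseteq> closure D2"
    and "\<forall>y\<in>D2. \<exists>xs :: nat \<Rightarrow> 'a. (\<forall>k. xs k \<in> M)
            \<and> (\<lambda>k. norm (xs k)) \<longlonglongrightarrow> 0
            \<and> (\<lambda>k. (T ^^ n k) (xs k)) \<longlonglongrightarrow> y
            \<and> (\<forall>x\<in>D1. (\<lambda>k. norm ((T ^^ n k) x) * norm (xs k)) \<longlonglongrightarrow> 0)"
    and "\<forall>k. (T ^^ n k) ` M \<subseteq> M"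
  shows "M_diskcyclic M T"
proof -
  define f where "f = (\<lambda>(\<alpha>, k) u. \<alpha> *\<^sub>C (T ^^ n k) u)"
  have "\<exists>u \<in> M. M \<subseteq> closure ((\<lambda>i. f i u) ` (unit_disk \<times> UNIV))"
  proof (rule dense_orbit_of_transitive_family)
    show "closed M" "M \<noteq> {}"
      using \<open>closed_csubspace M\<close> by (auto simp: closed_csubspace_def)
    show "continuous_on M (f i)" for i
      using bounded_linear_compose[OF bounded_linear_scaleC
          bounded_clinear_funpow[OF \<open>bounded_clinear T\<close>, unfolded bounded_clinear_def, THEN conjunct1]]
      by (auto simp: f_def split: prod.split intro: linear_continuous_on)
    show "\<exists>u \<in> U \<inter> M. \<exists>i \<in> unit_disk \<times> UNIV. f i u \<in> V"
      if "open U" "open V" "U \<inter> M \<noteq> {}" "V \<inter> M \<noteq> {}" for U V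
      using disk_transitive_on_subspace[OF assms(2,3,8,9,11,12) that(1,3,2,4)]
      by (fastforce simp: f_def)
  qed
  then obtain u where "u \<in> M" and dense: "M \<subseteq> closure ((\<lambda>i. f i u) ` (unit_disk \<times> UNIV))"
    by blast
  have "(\<lambda>i. f i u) ` (unit_disk \<times> UNIV) \<subseteq> {\<alpha> *\<^sub>C (T ^^ j) u | \<alpha> j. \<alpha> \<in> unit_disk} \<inter> M"
    using \<open>u \<in> M\<close> \<open>\<forall>k. (T ^^ n k) ` M \<subseteq> M\<close> \<open>closed_csubspace M\<close>
    by (fastforce simp: f_def closed_csubspace_def)
  then show ?thesis
    unfolding M_diskcyclic_def using dense closure_mono by blast
qed

end
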